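(* Let $n=p_1^{r_1}p_2^{r_2}\cdots p_k^{r_k}\ge 2$, where $p_1,\ldots,p_k$ are distinct primes and $r_i\ge1$. Then $\theta_t(G(n))=k$, and there is exactly one total clique covering of $G(n)$ consisting of precisely $k$ cliques.
   Context: For an integer $n\ge2$, $G(n)$ is the simple undirected graph whose vertex set is the set of divisors of $n$ greater than $1$, two distinct vertices $a,b$ being adjacent iff $\gcd(a,b)>1$. A clique is a set of pairwise adjacent vertices; a set $S$ of cliques of a graph is a total clique covering if every vertex lies in some member of $S$ and every edge has both endpoints in some member of $S$. $\theta_t(G)$ denotes the minimum size of a total clique covering of $G$. *)

theory Defs
  imports "HOL-Computational_Algebra.Primes"
begin

text \<open>A simple graph is given by a vertex set V and a (symmetric, irreflexive)
  edge relation E.\<close>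

definition is_clique :: "'a set \<Rightarrow> ('a \<Rightarrow> 'a \<Rightarrow> bool) \<Rightarrow> 'a set \<Rightarrow> bool" where
  "is_clique V E C \<longleftrightarrow> C \<subseteq> V \<and> (\<forall>a\<in>C. \<forall>b\<in>C. a \<noteq> b \<longrightarrow> E a b)"

definition total_clique_covering ::
    "'a set \<Rightarrow> ('a \<Rightarrow> 'a \<Rightarrow> bool) \<Rightarrow> 'a set set \<Rightarrow> bool" where
  "total_clique_covering V E S \<longleftrightarrow>
     (\<forall>C\<in>S. is_clique V E C) \<and>
     (\<forall>v\<in>V. \<exists>C\<in>S. v \<in> C) \<and>
     (\<forall>a\<in>V. \<forall>b\<in>V. E a b \<longrightarrow> (\<exists>C\<in>S. a \<in> C \<and> b \<in> C))"

definition theta_t :: "'a set \<Rightarrow> ('a \<Rightarrow> 'a \<Rightarrow> bool) \<Rightarrow> nat" where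
  "theta_t V E = (LEAST m. \<exists>S. finite S \<and> total_clique_covering V E S \<and> card S = m)"

definition Gverts :: "nat \<Rightarrow> nat set" where
  "Gverts n = {d. d dvd n \<and> 1 < d}"

definition Gadj :: "nat \<Rightarrow> nat \<Rightarrow> bool" where
  "Gadj a b \<longleftrightarrow> a \<noteq> b \<and> 1 < gcd a b"

end

theory Submission
  imports Defs
begin

text \<open>Every clique of G(n) contains at most one prime, and a clique through the prime p
  lies inside the set of multiples of p. So a total clique covering needs a separate clique
  for each of the k prime factors of n, and the k sets of multiples of the prime factors
  already form a covering. If a covering has exactly k cliques, each clique contains exactly
  one prime p and is then the unique clique covering the edges from p to its proper multiples,
  which forces it to be the whole set of multiples of p.\<close>

definition multiples_clique :: "nat \<Rightarrow> nat \<Rightarrow> nat set" where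
  "multiples_clique n p = {d \<in> Gverts n. p dvd d}"

lemma Gadj_prime_iff:
  assumes "prime p" "d \<noteq> p"
  shows "Gadj p d \<longleftrightarrow> p dvd d"
proof -
  have "gcd p d dvd p" by simp
  then have "gcd p d = 1 \<or> gcd p d = p" using assms(1) prime_nat_iff by blast
  then have "1 < gcd p d \<longleftrightarrow> gcd p d = p" using prime_gt_1_nat[OF assms(1)] by auto
  also have "\<dots> \<longleftrightarrow> p dvd d" by (metis gcd_dvd2 gcd_nat.absorb1)
  finally show ?thesis using assms(2) by (auto simp: Gadj_def)
qed

lemma not_Gadj_primes:
  assumes "prime p" "prime q"
  shows "\<not> Gadj p q"
proof
  assume "Gadj p q"
  then have "q \<noteq> p" by (simp add: Gadj_def)
  with \<open>Gadj p q\<close> assms(1) have "p dvd q" by (simp add: Gadj_prime_iff)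
  with assms \<open>q \<noteq> p\<close> show False using primes_dvd_imp_eq by blast
qed

lemma prime_factor_in_Gverts: "p \<in> prime_factors n \<Longrightarrow> p \<in> Gverts n"
  by (auto simp: Gverts_def in_prime_factors_iff prime_gt_Suc_0_nat)

lemma is_clique_multiples_clique:
  assumes "prime p"
  shows "is_clique (Gverts n) Gadj (multiples_clique n p)"
  unfolding is_clique_def multiples_clique_def
proof (intro conjI ballI impI)
  fix a b assume ab: "a \<in> {d \<in> Gverts n. p dvd d}" "b \<in> {d \<in> Gverts n. p dvd d}" "a \<noteq> b"
  then have "p dvd gcd a b" "gcd a b \<noteq> 0" by (auto simp: Gverts_def)
  then have "p \<le> gcd a b" by (simp add: dvd_imp_le)
  with ab(3) prime_gt_1_nat[OF assms] show "Gadj a b" by (simp add: Gadj_def)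
qed auto

lemma clique_through_prime_subset:
  assumes "is_clique (Gverts n) Gadj C" "prime p" "p \<in> C"
  shows "C \<subseteq> multiples_clique n p"
proof
  fix d assume "d \<in> C"
  with assms have "d \<in> Gverts n" "d = p \<or> Gadj p d" by (auto simp: is_clique_def)
  with assms(2) have "p dvd d" by (cases "d = p") (auto simp: Gadj_prime_iff)
  with \<open>d \<in> Gverts n\<close> show "d \<in> multiples_clique n p" by (simp add: multiples_clique_def)
qed

lemma prime_factor_dvd:
  fixes n c :: nat
  assumes "n \<noteq> 0" "c dvd n" "c \<noteq> 1"
  obtains p where "p \<in> prime_factors n" "p dvd c"
proof -
  from assms(3) obtain p where "prime p" "p dvd c" using prime_factor_nat by blast
  moreover have "p dvd n" using \<open>p dvd c\<close> assms(2) by (rule dvd_trans)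
  ultimately show thesis using that assms(1) by (simp add: in_prime_factors_iff)
qed

lemma total_clique_covering_multiples_cliques:
  assumes "n \<noteq> 0"
  shows "total_clique_covering (Gverts n) Gadj (multiples_clique n ` prime_factors n)"
  unfolding total_clique_covering_def
proof (intro conjI ballI impI)
  fix C assume "C \<in> multiples_clique n ` prime_factors n"
  then show "is_clique (Gverts n) Gadj C" by (auto intro: is_clique_multiples_clique)
next
  fix v assume v: "v \<in> Gverts n"
  then have "v dvd n" "v \<noteq> 1" by (auto simp: Gverts_def)
  with assms obtain p where "p \<in> prime_factors n" "p dvd v" by (rule prime_factor_dvd)
  with v show "\<exists>C \<in> multiples_clique n ` prime_factors n. v \<in> C"
    by (auto simp: multiples_clique_def)
next
  fix a b assume ab: "a \<in> Gverts n" "b \<in> Gverts n" "Gadj a b"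
  then have "gcd a b dvd n" "gcd a b \<noteq> 1"
    by (auto simp: Gverts_def Gadj_def intro: dvd_trans[OF gcd_dvd1])
  with assms obtain p where "p \<in> prime_factors n" "p dvd gcd a b" by (rule prime_factor_dvd)
  with ab show "\<exists>C \<in> multiples_clique n ` prime_factors n. a \<in> C \<and> b \<in> C"
    by (auto simp: multiples_clique_def)
qed

lemma card_multiples_cliques:
  "card (multiples_clique n ` prime_factors n) = card (prime_factors n)"
proof (rule card_image, rule inj_onI)
  fix p q assume pq: "p \<in> prime_factors n" "q \<in> prime_factors n"
    "multiples_clique n p = multiples_clique n q"
  have "p \<in> multiples_clique n p"
    using prime_factor_in_Gverts[OF pq(1)] by (simp add: multiples_clique_def)
  then have "p \<in> multiples_clique n q" using pq(3) by simp
  then have "q dvd p" by (simp add: multiples_clique_def)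
  with pq(1,2) show "p = q" by (metis in_prime_factors_imp_prime primes_dvd_imp_eq)
qed

lemma clique_primes_eq:
  assumes "is_clique (Gverts n) Gadj C" "p \<in> C" "q \<in> C" "prime p" "prime q"
  shows "p = q"
proof (rule ccontr)
  assume "p \<noteq> q"
  with assms have "Gadj p q" unfolding is_clique_def by blast
  with assms(4,5) not_Gadj_primes show False by blast
qed

lemma total_clique_covering_prime_selector:
  assumes "total_clique_covering (Gverts n) Gadj S"
  obtains f where "\<And>p. p \<in> prime_factors n \<Longrightarrow> f p \<in> S \<and> p \<in> f p"
    "inj_on f (prime_factors n)"
proof -
  have "\<forall>p \<in> prime_factors n. \<exists>C. C \<in> S \<and> p \<in> C"
    using assms prime_factor_in_Gverts unfolding total_clique_covering_def by blast
  then obtain f where f: "\<And>p. p \<in> prime_factors n \<Longrightarrow> f p \<in> S \<and> p \<in> f p"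
    by (metis bchoice)
  have "inj_on f (prime_factors n)"
  proof (rule inj_onI)
    fix p q assume "p \<in> prime_factors n" "q \<in> prime_factors n" "f p = f q"
    with f assms show "p = q"
      by (metis clique_primes_eq in_prime_factors_imp_prime total_clique_covering_def)
  qed
  with f that show thesis by blast
qed

lemma total_clique_covering_card_ge:
  assumes "total_clique_covering (Gverts n) Gadj S" "finite S"
  shows "card (prime_factors n) \<le> card S"
proof -
  obtain f where "\<And>p. p \<in> prime_factors n \<Longrightarrow> f p \<in> S \<and> p \<in> f p"
    "inj_on f (prime_factors n)"
    using total_clique_covering_prime_selector[OF assms(1)] by blast
  then show ?thesis using card_inj_on_le[OF _ _ assms(2)] by blast
qed

lemma total_clique_covering_card_eq:
  assumes S: "total_clique_covering (Gverts n) Gadj S" "finite S"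
    and card_eq: "card S = card (prime_factors n)"
  shows "S = multiples_clique n ` prime_factors n"
proof -
  have cliques: "\<And>C. C \<in> S \<Longrightarrow> is_clique (Gverts n) Gadj C"
    using S(1) by (simp add: total_clique_covering_def)
  obtain f where f: "\<And>p. p \<in> prime_factors n \<Longrightarrow> f p \<in> S \<and> p \<in> f p"
    and inj: "inj_on f (prime_factors n)"
    using total_clique_covering_prime_selector[OF S(1)] by blast
  have image_sub: "f ` prime_factors n \<subseteq> S" using f by blast
  have S_eq: "S = f ` prime_factors n"
    using card_subset_eq[OF S(2) image_sub] card_image[OF inj] card_eq by simp
  have f_unique: "C = f p" if "C \<in> S" "p \<in> C" "p \<in> prime_factors n" for C p
  proof -
    from \<open>C \<in> S\<close> S_eq obtain q where "q \<in> prime_factors n" "C = f q" by blast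
    with that f cliques show ?thesis by (metis clique_primes_eq in_prime_factors_imp_prime)
  qed
  have "f p = multiples_clique n p" if p: "p \<in> prime_factors n" for p
  proof
    show "f p \<subseteq> multiples_clique n p"
      by (rule clique_through_prime_subset)
        (use f[OF p] cliques in_prime_factors_imp_prime[OF p] in auto)
    show "multiples_clique n p \<subseteq> f p"
    proof
      fix d assume d: "d \<in> multiples_clique n p"
      show "d \<in> f p"
      proof (cases "d = p")
        case False
        with d p have "Gadj p d" "d \<in> Gverts n"
          by (auto simp: multiples_clique_def Gadj_prime_iff in_prime_factors_imp_prime)
        then obtain C where "C \<in> S" "p \<in> C" "d \<in> C"
          using S(1) prime_factor_in_Gverts[OF p] unfolding total_clique_covering_def by meson
        with f_unique p show ?thesis by blast
      qed (use f p in blast)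
    qed
  qed
  with S_eq show ?thesis by simp
qed

theorem theorem4:
  fixes n :: nat
  assumes "n \<ge> 2"
  shows "theta_t (Gverts n) Gadj = card (prime_factors n)
         \<and> (\<exists>!S. total_clique_covering (Gverts n) Gadj S \<and> card S = card (prime_factors n))"
proof -
  let ?K = "multiples_clique n ` prime_factors n"
  have K: "total_clique_covering (Gverts n) Gadj ?K" "card ?K = card (prime_factors n)"
    using assms by (simp_all add: total_clique_covering_multiples_cliques card_multiples_cliques)
  have "prime_factors n \<noteq> {}"
    using assms by (auto simp: prime_factorization_empty_iff)
  then have k_pos: "card (prime_factors n) > 0" by (simp add: card_gt_0_iff)
  have "theta_t (Gverts n) Gadj = card (prime_factors n)"
    unfolding theta_t_def
  proof (rule Least_equality)
    show "\<exists>S. finite S \<and> total_clique_covering (Gverts n) Gadj S \<and> card S = card (prime_factors n)"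
      using K by (metis finite_imageI finite_set_mset)
  qed (use total_clique_covering_card_ge in blast)
  moreover have "\<exists>!S. total_clique_covering (Gverts n) Gadj S \<and> card S = card (prime_factors n)"
  proof (rule ex1I[of _ ?K])
    fix S assume "total_clique_covering (Gverts n) Gadj S \<and> card S = card (prime_factors n)"
    moreover from this k_pos have "finite S" using card_gt_0_iff by metis
    ultimately show "S = ?K" using total_clique_covering_card_eq by blast
  qed (use K in blast)
  ultimately show ?thesis ..
qed

end
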